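(* Let $m,n\ge 1$ and let $D,E$ be linear subspaces of $M_{m\times n}$ such that $\sigma(D,E)=\operatorname{conv}(\Phi_D\cup\Phi^E)$ is a proper face of the cone $\mathbb{D}$ of decomposable maps, and such that every interior point of $\sigma(D,E)$ is an interior point of the cone $\mathbb{P}_1$ of positive linear maps $M_m\to M_n$. Then every nonzero element $A$ of $$\sigma(D,E)'=\{A\in\mathbb{T}:\ \langle A,\phi\rangle=0 \text{ for every }\phi\in\sigma(D,E)\}$$ belongs to $\mathbb{T}\setminus\mathbb{V}_1$.
   Context: $M_k$ denotes complex $k\times k$ matrices and $M_{m\times n}$ complex $m\times n$ matrices; $X^{\mathrm t}$ is the transpose. A linear map $\phi:M_m\to M_n$ is positive if it maps positive semi-definite matrices to positive semi-definite matrices; $\mathbb{P}_1$ is the cone of positive maps. For a finite set $\mathcal V=\{V_1,\dots,V_\nu\}\subset M_{m\times n}$ put $\phi_{\mathcal V}(X)=\sum_i V_i^*XV_i$ and $\phi^{\mathcal V}(X)=\sum_i V_i^*X^{\mathrm t}V_i$. The cone of decomposable maps is $\mathbb{D}=\{\phi_{\mathcal V}+\phi^{\mathcal W}\}$ (over all finite $\mathcal V,\mathcal W\subset M_{m\times n}$). For a subspace $D\subset M_{m\times n}$, $\Phi_D=\{\phi_{\mathcal V}:\operatorname{span}\mathcal V\subset D\}$ and $\Phi^E=\{\phi^{\mathcal V}:\operatorname{span}\mathcal V\subset E\}$. A point $x$ of a convex set $C$ is an interior point of $C$ if for every $y\in C$ there is $t>1$ with $(1-t)y+tx\in C$. Identify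 $M_n\otimes M_m$ with $m\times m$ block matrices $A=\sum_{i,j=1}^m a_{ij}\otimes e_{ij}$ with blocks $a_{ij}\in M_n$; the partial transpose is $A^\tau=\sum_{i,j}a_{ji}\otimes e_{ij}$. $\mathbb{T}$ is the cone of $A\in M_n\otimes M_m$ with both $A$ and $A^\tau$ positive semi-definite. For $z\in M_{m\times n}$ with rows $z_1,\dots,z_m\in\mathbb C^n$ (as column vectors), $\tilde z\tilde z^*$ is the block matrix whose $(i,j)$ block is $z_iz_j^*$; $\mathbb{V}_1$ is the convex cone generated by $\{\tilde z\tilde z^*: \operatorname{rank} z\le 1\}$ (the separable cone). The bilinear pairing is $\langle A,\phi\rangle=\sum_{i,j=1}^m\operatorname{Tr}\big(a_{ij}\,\phi(e_{ij})^{\mathrm t}\big)$ for $A=\sum a_{ij}\otimes e_{ij}$ and $\phi:M_m\to M_n$ linear, where $e_{ij}$ are the matrix units of $M_m$. *)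

theory Defs
  imports "HOL-Analysis.Analysis"
begin

text \<open>The sizes m and n are encoded by finite index types 'm and 'n
 (so m, n \<ge> 1 automatically). M_k = complex^'k^'k, M_{m x n} = complex^'n^'m
 (m rows, n columns). M_n \<otimes> M_m is represented by
 complex^('m::finite \<times> 'n::finite)^('m::finite \<times> 'n::finite), the entry at ((i,k),(j,l)) being the (k,l) entry
 of the block a_ij.\<close>

definition cadj :: "complex^'b^'a \<Rightarrow> complex^'a^'b" where
  "cadj V = (\<chi> i j. cnj (V $ j $ i))"

definition cscale :: "complex \<Rightarrow> complex^'b^'a \<Rightarrow> complex^'b^'a" where
  "cscale c X = (\<chi> i j. c * X $ i $ j)"

definition psd :: "complex^'k^'k \<Rightarrow> bool" where
  "psd A \<longleftrightarrow> (\<forall>x::complex^'k.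
      Im (\<Sum>i\<in>UNIV. cnj (x $ i) * (A *v x) $ i) = 0 \<and>
      Re (\<Sum>i\<in>UNIV. cnj (x $ i) * (A *v x) $ i) \<ge> 0)"

definition clinear_map :: "(complex^'m^'m \<Rightarrow> complex^'n^'n) \<Rightarrow> bool" where
  "clinear_map \<phi> \<longleftrightarrow> (\<forall>X Y. \<phi> (X + Y) = \<phi> X + \<phi> Y) \<and> (\<forall>c X. \<phi> (cscale c X) = cscale c (\<phi> X))"

definition P1 :: "(complex^'m^'m \<Rightarrow> complex^'n^'n) set" where
  "P1 = {\<phi>. clinear_map \<phi> \<and> (\<forall>X. psd X \<longrightarrow> psd (\<phi> X))}"

definition phi_low :: "(complex^'n^'m) list \<Rightarrow> complex^'m^'m \<Rightarrow> complex^'n^'n" where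
  "phi_low Vs X = sum_list (map (\<lambda>V. cadj V ** X ** V) Vs)"

definition phi_up :: "(complex^'n^'m) list \<Rightarrow> complex^'m^'m \<Rightarrow> complex^'n^'n" where
  "phi_up Vs X = sum_list (map (\<lambda>V. cadj V ** transpose X ** V) Vs)"

definition Dcone :: "(complex^'m^'m \<Rightarrow> complex^'n^'n) set" where
  "Dcone = {\<phi>. \<exists>Vs Ws. \<phi> = (\<lambda>X. phi_low Vs X + phi_up Ws X)}"

definition csubspace :: "(complex^'b^'a) set \<Rightarrow> bool" where
  "csubspace D \<longleftrightarrow> 0 \<in> D \<and> (\<forall>x\<in>D. \<forall>y\<in>D. x + y \<in> D) \<and> (\<forall>c. \<forall>x\<in>D. cscale c x \<in> D)"

definition cspan :: "(complex^'b^'a) set \<Rightarrow> (complex^'b^'a) set" where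
  "cspan S = \<Inter>{D. csubspace D \<and> S \<subseteq> D}"

definition PhiD :: "(complex^'n^'m) set \<Rightarrow> (complex^'m^'m \<Rightarrow> complex^'n^'n) set" where
  "PhiD D = {phi_low Vs | Vs. cspan (set Vs) \<subseteq> D}"

definition PhiE :: "(complex^'n^'m) set \<Rightarrow> (complex^'m^'m \<Rightarrow> complex^'n^'n) set" where
  "PhiE E = {phi_up Vs | Vs. cspan (set Vs) \<subseteq> E}"

definition fcomb :: "real \<Rightarrow> ('a \<Rightarrow> 'b::real_vector) \<Rightarrow> ('a \<Rightarrow> 'b) \<Rightarrow> 'a \<Rightarrow> 'b" where
  "fcomb t y x = (\<lambda>X. (1 - t) *\<^sub>R y X + t *\<^sub>R x X)"

definition fconv :: "('a \<Rightarrow> 'b::real_vector) set \<Rightarrow> ('a \<Rightarrow> 'b) set" where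
  "fconv S = {\<phi>. \<exists>k (c::nat \<Rightarrow> real) f. (\<forall>i<k. c i \<ge> 0 \<and> f i \<in> S) \<and> (\<Sum>i<k. c i) = 1 \<and>
                 \<phi> = (\<lambda>X. \<Sum>i<k. c i *\<^sub>R f i X)}"

definition fconvex :: "('a \<Rightarrow> 'b::real_vector) set \<Rightarrow> bool" where
  "fconvex S \<longleftrightarrow> (\<forall>a\<in>S. \<forall>b\<in>S. \<forall>u::real. 0 \<le> u \<and> u \<le> 1 \<longrightarrow> fcomb u a b \<in> S)"

definition fface_of :: "('a \<Rightarrow> 'b::real_vector) set \<Rightarrow> ('a \<Rightarrow> 'b) set \<Rightarrow> bool" where
  "fface_of F C \<longleftrightarrow> F \<subseteq> C \<and> fconvex F \<and>
     (\<forall>a\<in>C. \<forall>b\<in>C. \<forall>x\<in>F. \<forall>u::real. 0 < u \<and> u < 1 \<and> a \<noteq> b \<and> x = fcomb u a b \<longrightarrow> a \<in> F \<and> b \<in> F)"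

definition proper_fface_of :: "('a \<Rightarrow> 'b::real_vector) set \<Rightarrow> ('a \<Rightarrow> 'b) set \<Rightarrow> bool" where
  "proper_fface_of F C \<longleftrightarrow> fface_of F C \<and> F \<noteq> C"

definition interior_pt :: "('a \<Rightarrow> 'b::real_vector) set \<Rightarrow> ('a \<Rightarrow> 'b) \<Rightarrow> bool" where
  "interior_pt C x \<longleftrightarrow> x \<in> C \<and> (\<forall>y\<in>C. \<exists>t>1. fcomb t y x \<in> C)"

definition sigma :: "(complex^'n^'m) set \<Rightarrow> (complex^'n^'m) set \<Rightarrow> (complex^'m^'m \<Rightarrow> complex^'n^'n) set" where
  "sigma D E = fconv (PhiD D \<union> PhiE E)"

definition blk :: "complex^('m::finite \<times> 'n::finite)^('m::finite \<times> 'n::finite) \<Rightarrow> 'm \<Rightarrow> 'm \<Rightarrow> complex^'n^'n" where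
  "blk A i j = (\<chi> k l. A $ (i,k) $ (j,l))"

definition ptrans :: "complex^('m::finite \<times> 'n::finite)^('m::finite \<times> 'n::finite) \<Rightarrow> complex^('m::finite \<times> 'n::finite)^('m::finite \<times> 'n::finite)" where
  "ptrans A = (\<chi> p q. A $ (fst q, snd p) $ (fst p, snd q))"

definition Tcone :: "(complex^('m::finite \<times> 'n::finite)^('m::finite \<times> 'n::finite)) set" where
  "Tcone = {A. psd A \<and> psd (ptrans A)}"

definition zz :: "complex^'n^'m \<Rightarrow> complex^('m::finite \<times> 'n::finite)^('m::finite \<times> 'n::finite)" where
  "zz z = (\<chi> p q. z $ fst p $ snd p * cnj (z $ fst q $ snd q))"

definition V1 :: "(complex^('m::finite \<times> 'n::finite)^('m::finite \<times> 'n::finite)) set" where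
  "V1 = {A. \<exists>k (c::nat \<Rightarrow> real) z. (\<forall>i<k. c i \<ge> 0 \<and> rank (z i :: complex^'n^'m) \<le> 1) \<and>
              A = (\<Sum>i<k. c i *\<^sub>R zz (z i))}"

definition unitmat :: "'m \<Rightarrow> 'm \<Rightarrow> complex^'m^'m" where
  "unitmat i j = (\<chi> a b. if a = i \<and> b = j then 1 else 0)"

definition pairing :: "complex^('m::finite \<times> 'n::finite)^('m::finite \<times> 'n::finite) \<Rightarrow> (complex^'m^'m \<Rightarrow> complex^'n^'n) \<Rightarrow> complex" where
  "pairing A \<phi> = (\<Sum>i\<in>UNIV. \<Sum>j\<in>UNIV. trace (blk A i j ** transpose (\<phi> (unitmat i j))))"

definition sigma_dual :: "(complex^'n^'m) set \<Rightarrow> (complex^'n^'m) set \<Rightarrow> (complex^('m::finite \<times> 'n::finite)^('m::finite \<times> 'n::finite)) set" where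
  "sigma_dual D E = {A \<in> Tcone. \<forall>\<phi>\<in>sigma D E. pairing A \<phi> = 0}"

end

theory Submission
  imports Defs "HOL-Library.Complex_Order"
begin

text \<open>
  Separable elements pair nonnegatively with positive maps. The convex set \<open>\<sigma>(D,E)\<close> has an
  interior point \<open>\<phi>\<close> (a relative interior point of its image in a Euclidean space), which
  by hypothesis is also an interior point of \<open>\<P>\<^sub>1\<close>. So for each positive map \<open>\<psi>\<close> some
  \<open>(1 - t)\<psi> + t\<phi>\<close> with \<open>t > 1\<close> is still positive, and if \<open>A \<in> \<V>\<^sub>1\<close> annihilates \<open>\<sigma>(D,E)\<close>
  this gives \<open>(1 - t)\<langle>A,\<psi>\<rangle> \<ge> 0\<close>, i.e. \<open>\<langle>A,\<psi>\<rangle> \<le> 0\<close>. Taking for \<open>\<psi>\<close> the maps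
  \<open>X \<mapsto> x\<^sub>j\<^sub>j e\<^sub>l\<^sub>l\<close> shows that the diagonal of \<open>A\<close> vanishes, which forces a separable \<open>A\<close>
  to be \<open>0\<close>.
\<close>

lemma sum_lessThan_add:
  fixes m n :: nat
  shows "(\<Sum>i<m + n. g i) = (\<Sum>i<m. g i) + (\<Sum>i<n. g (m + i))"
  by (induction n) (simp_all add: add_ac)

lemma sum_sum_delta:
  fixes a :: "'a::finite" and b :: "'b::finite"
  shows "(\<Sum>i\<in>UNIV. \<Sum>j\<in>UNIV. if a = i \<and> b = j then f i j else 0) = (f a b :: 'c::comm_monoid_add)"
proof -
  have "(\<Sum>j\<in>UNIV. if a = i \<and> b = j then f i j else 0) = (if a = i then f i b else 0)" for i
    by (simp add: if_if_eq_conj[symmetric])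
  then show ?thesis by simp
qed

lemma sum_swap_pairs:
  "(\<Sum>k\<in>K. \<Sum>l\<in>L. \<Sum>i\<in>I. \<Sum>j\<in>J. F k l i j) = (\<Sum>i\<in>I. \<Sum>j\<in>J. \<Sum>k\<in>K. \<Sum>l\<in>L. F k l i j)"
proof -
  have "(\<Sum>k\<in>K. \<Sum>l\<in>L. \<Sum>i\<in>I. \<Sum>j\<in>J. F k l i j) = (\<Sum>k\<in>K. \<Sum>i\<in>I. \<Sum>l\<in>L. \<Sum>j\<in>J. F k l i j)"
    by (rule sum.cong[OF refl], rule sum.swap)
  also have "\<dots> = (\<Sum>i\<in>I. \<Sum>k\<in>K. \<Sum>j\<in>J. \<Sum>l\<in>L. F k l i j)"
    by (subst sum.swap) (rule sum.cong[OF refl], rule sum.cong[OF refl], rule sum.swap)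
  also have "\<dots> = (\<Sum>i\<in>I. \<Sum>j\<in>J. \<Sum>k\<in>K. \<Sum>l\<in>L. F k l i j)"
    by (rule sum.cong[OF refl], rule sum.swap)
  finally show ?thesis .
qed

lemma matrix_add_rdistrib: "(B + C) ** A = B ** A + C ** (A :: 'a::semiring_1^'n^'m)"
  by (simp add: vec_eq_iff matrix_matrix_mult_def distrib_right sum.distrib)

lemma transpose_add: "transpose (A + B) = transpose A + transpose B"
  by (simp add: vec_eq_iff transpose_def)

lemma clinear_map_zero: "clinear_map f \<Longrightarrow> f 0 = 0"
  unfolding clinear_map_def by (metis add_cancel_right_right)

lemma clinear_map_sum: "clinear_map f \<Longrightarrow> f (sum g S) = (\<Sum>x\<in>S. f (g x))"
  by (induction S rule: infinite_finite_induct) (auto simp: clinear_map_zero clinear_map_def)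

lemma cscale_add_right: "cscale c (A + B) = cscale c A + cscale c B"
  by (simp add: vec_eq_iff cscale_def distrib_left)

lemma cscale_zero_right: "cscale c 0 = 0"
  by (simp add: vec_eq_iff cscale_def)

lemma cscale_sum: "cscale c (sum f S) = (\<Sum>x\<in>S. cscale c (f x))"
  by (induction S rule: infinite_finite_induct) (auto simp: cscale_add_right cscale_zero_right)

lemma cscale_scaleR: "cscale c (r *\<^sub>R A) = r *\<^sub>R cscale c A"
  by (simp add: vec_eq_iff cscale_def scaleR_conv_of_real mult_ac)

lemma cscale_matrix_mult_left: "cscale c A ** B = cscale c (A ** B)"
  by (simp add: vec_eq_iff cscale_def matrix_matrix_mult_def sum_distrib_left mult_ac)

lemma cscale_matrix_mult_right: "A ** cscale c B = cscale c (A ** B)"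
  by (simp add: vec_eq_iff cscale_def matrix_matrix_mult_def sum_distrib_left mult_ac)

lemma transpose_cscale: "transpose (cscale c A) = cscale c (transpose A)"
  by (simp add: vec_eq_iff transpose_def cscale_def)

lemma matrix_eq_sum_unitmat:
  "(X::complex^'m^'m) = (\<Sum>i\<in>UNIV. \<Sum>j\<in>UNIV. cscale (X $ i $ j) (unitmat i j))"
  by (simp add: vec_eq_iff cscale_def unitmat_def sum_sum_delta if_distrib[of "(*) _"] cong: if_cong)

lemma clinear_map_eq_sum_unitmat:
  assumes "clinear_map f"
  shows "f X = (\<Sum>i\<in>UNIV. \<Sum>j\<in>UNIV. cscale (X $ i $ j) (f (unitmat i j)))"
  using assms by (subst matrix_eq_sum_unitmat) (simp add: clinear_map_sum, simp add: clinear_map_def)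

lemma clinear_map_eqI:
  assumes "clinear_map f" "clinear_map g" "\<And>i j. f (unitmat i j) = g (unitmat i j)"
  shows "f = g"
proof
  fix X
  show "f X = g X"
    using assms by (simp add: clinear_map_eq_sum_unitmat[of f X] clinear_map_eq_sum_unitmat[of g X])
qed

lemma clinear_map_phi_low: "clinear_map (phi_low Vs)"
  unfolding clinear_map_def phi_low_def
  by (induction Vs) (auto simp: matrix_add_ldistrib matrix_add_rdistrib cscale_add_right
      cscale_matrix_mult_left cscale_matrix_mult_right cscale_zero_right)

lemma clinear_map_phi_up: "clinear_map (phi_up Vs)"
  unfolding clinear_map_def phi_up_def
  by (induction Vs) (auto simp: transpose_add transpose_cscale matrix_add_ldistrib matrix_add_rdistrib
      cscale_add_right cscale_matrix_mult_left cscale_matrix_mult_right cscale_zero_right)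

lemma clinear_map_fcomb: "clinear_map f \<Longrightarrow> clinear_map g \<Longrightarrow> clinear_map (fcomb t f g)"
  unfolding clinear_map_def fcomb_def by (auto simp: scaleR_add_right cscale_add_right cscale_scaleR)

lemma clinear_map_fconv:
  assumes "\<forall>f\<in>S. clinear_map f" "\<phi> \<in> fconv S"
  shows "clinear_map \<phi>"
proof -
  obtain k :: nat and c f where f: "\<forall>i<k. f i \<in> S" and \<phi>: "\<phi> = (\<lambda>X. \<Sum>i<k. c i *\<^sub>R f i X)"
    using assms(2) unfolding fconv_def by blast
  have "clinear_map (f i)" if "i < k" for i
    using assms(1) f that by blast
  then show ?thesis
    unfolding \<phi> clinear_map_def by (simp add: scaleR_add_right sum.distrib cscale_sum cscale_scaleR)
qed

lemma clinear_map_sigma: "\<phi> \<in> sigma D E \<Longrightarrow> clinear_map \<phi>"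
  unfolding sigma_def PhiD_def PhiE_def
  by (erule clinear_map_fconv[rotated]) (auto simp: clinear_map_phi_low clinear_map_phi_up)

section \<open>Convex sets of maps and their interior points\<close>

lemma fconvex_fconv:
  fixes S :: "('a \<Rightarrow> 'b::real_vector) set"
  shows "fconvex (fconv S)"
  unfolding fconvex_def
proof (intro ballI allI impI)
  fix a b and u :: real
  assume "a \<in> fconv S" "b \<in> fconv S" and u: "0 \<le> u \<and> u \<le> 1"
  then obtain k1 k2 :: nat and c1 c2 :: "nat \<Rightarrow> real" and f1 f2 :: "nat \<Rightarrow> 'a \<Rightarrow> 'b"
    where A: "\<forall>i<k1. c1 i \<ge> 0 \<and> f1 i \<in> S" "(\<Sum>i<k1. c1 i) = 1" "a = (\<lambda>X. \<Sum>i<k1. c1 i *\<^sub>R f1 i X)"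
      and B: "\<forall>i<k2. c2 i \<ge> 0 \<and> f2 i \<in> S" "(\<Sum>i<k2. c2 i) = 1" "b = (\<lambda>X. \<Sum>i<k2. c2 i *\<^sub>R f2 i X)"
    unfolding fconv_def mem_Collect_eq by blast
  define c where "c i = (if i < k1 then (1 - u) * c1 i else u * c2 (i - k1))" for i
  define f where "f i = (if i < k1 then f1 i else f2 (i - k1))" for i
  have "\<forall>i<k1 + k2. c i \<ge> 0 \<and> f i \<in> S"
    using A(1) B(1) u by (auto simp: c_def f_def)
  moreover have "(\<Sum>i<k1 + k2. c i) = 1"
    using A(2) B(2) by (simp add: sum_lessThan_add c_def sum_distrib_left[symmetric])
  moreover have "fcomb u a b = (\<lambda>X. \<Sum>i<k1 + k2. c i *\<^sub>R f i X)"
    by (simp add: sum_lessThan_add fcomb_def A(3) B(3) c_def f_def scaleR_sum_right)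
  ultimately show "fcomb u a b \<in> fconv S"
    unfolding fconv_def by blast
qed

lemma fconv_superset: "S \<subseteq> fconv S"
proof
  fix f assume "f \<in> S"
  then show "f \<in> fconv S"
    unfolding fconv_def
    by (intro CollectI exI[of _ "1::nat"] exI[of _ "\<lambda>_. 1::real"] exI[of _ "\<lambda>_. f"]) simp
qed

lemma sigma_nonempty:
  assumes "csubspace D"
  shows "sigma D E \<noteq> {}"
proof -
  have "phi_low [] \<in> PhiD D"
    using assms unfolding PhiD_def cspan_def by auto
  then show ?thesis
    unfolding sigma_def using fconv_superset by blast
qed

text \<open>
  A complex-linear map is determined by its values on the matrix units, so \<open>L\<close> below embeds
  \<open>S\<close> affinely into a Euclidean space, where a relative interior point of the image exists.
\<close>

lemma fconvex_ex_interior_pt: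
  fixes S :: "(complex^'m^'m \<Rightarrow> complex^'n^'n) set"
  assumes convex: "fconvex S" and nonempty: "S \<noteq> {}" and linear: "\<forall>f\<in>S. clinear_map f"
  shows "\<exists>\<phi>. interior_pt S \<phi>"
proof -
  define L :: "(complex^'m^'m \<Rightarrow> complex^'n^'n) \<Rightarrow> (complex^'n^'n)^('m \<times> 'm)"
    where "L f = (\<chi> p. f (unitmat (fst p) (snd p)))" for f
  have L_fcomb: "L (fcomb t y x) = (1 - t) *\<^sub>R L y + t *\<^sub>R L x" for t y x
    by (simp add: vec_eq_iff fcomb_def L_def)
  have L_inj: "f = g" if "clinear_map f" "clinear_map g" "L f = L g" for f g
    using that by (intro clinear_map_eqI) (auto simp: L_def vec_eq_iff)
  have "convex (L ` S)"
    unfolding convex_def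
  proof (intro ballI allI impI)
    fix x y u v assume "x \<in> L ` S" "y \<in> L ` S" and uv: "0 \<le> u" "0 \<le> (v::real)" "u + v = 1"
    then obtain a b where ab: "a \<in> S" "b \<in> S" "x = L a" "y = L b" by blast
    then have "fcomb v a b \<in> S"
      using convex uv unfolding fconvex_def by simp
    moreover have "u *\<^sub>R x + v *\<^sub>R y = L (fcomb v a b)"
      using uv by (simp add: L_fcomb ab)
    ultimately show "u *\<^sub>R x + v *\<^sub>R y \<in> L ` S" by simp
  qed
  moreover have "L ` S \<noteq> {}"
    using nonempty by blast
  ultimately obtain s where s: "s \<in> rel_interior (L ` S)"
    using rel_interior_eq_empty by blast
  then obtain \<phi> where \<phi>: "\<phi> \<in> S" "s = L \<phi>"
    using rel_interior_subset by blast
  have "interior_pt S \<phi>"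
    unfolding interior_pt_def
  proof (intro conjI ballI)
    fix y assume y: "y \<in> S"
    then obtain t where t: "t > 1" "(1 - t) *\<^sub>R L y + t *\<^sub>R s \<in> L ` S"
      using s convex_rel_interior_iff[OF \<open>convex (L ` S)\<close> \<open>L ` S \<noteq> {}\<close>] by blast
    then obtain \<psi> where "\<psi> \<in> S" "L (fcomb t y \<phi>) = L \<psi>"
      by (auto simp: L_fcomb \<phi>(2))
    moreover have "fcomb t y \<phi> = \<psi>"
      using calculation y \<phi>(1) linear by (intro L_inj) (simp_all add: clinear_map_fcomb)
    ultimately show "\<exists>t>1. fcomb t y \<phi> \<in> S"
      using t(1) by blast
  qed (rule \<phi>(1))
  then show ?thesis by blast
qed

lemma sigma_ex_interior_pt: "csubspace D \<Longrightarrow> \<exists>\<phi>. interior_pt (sigma D E) \<phi>"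
  using fconvex_ex_interior_pt[OF _ sigma_nonempty] fconvex_fconv clinear_map_sigma
  unfolding sigma_def by blast

section \<open>Separable elements and positive maps\<close>

lemma pairing_expand:
  "pairing A \<phi> =
     (\<Sum>i\<in>UNIV. \<Sum>j\<in>UNIV. \<Sum>k\<in>UNIV. \<Sum>l\<in>UNIV. A $ (i, k) $ (j, l) * \<phi> (unitmat i j) $ k $ l)"
  by (simp add: pairing_def trace_def matrix_matrix_mult_def transpose_def blk_def)

lemma pairing_zero: "pairing 0 \<phi> = 0"
  by (simp add: pairing_expand)

lemma pairing_add: "pairing (A + B) \<phi> = pairing A \<phi> + pairing B \<phi>"
  by (simp add: pairing_expand distrib_right sum.distrib)

lemma pairing_sum: "pairing (sum g S) \<phi> = (\<Sum>x\<in>S. pairing (g x) \<phi>)"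
  by (induction S rule: infinite_finite_induct) (simp_all add: pairing_zero pairing_add)

lemma pairing_scaleR: "pairing (r *\<^sub>R A) \<phi> = of_real r * pairing A \<phi>"
  unfolding pairing_expand by (simp add: scaleR_conv_of_real[where 'a=complex] sum_distrib_left mult.assoc)

lemma pairing_fcomb: "pairing A (fcomb t y x) = of_real (1 - t) * pairing A y + of_real t * pairing A x"
  unfolding pairing_expand fcomb_def
  by (simp add: scaleR_conv_of_real[where 'a=complex] distrib_left sum.distrib sum_distrib_left mult_ac)

text \<open>In the order of HOL-Library.Complex_Order, \<open>0 \<le> z\<close> means that \<open>z\<close> is a nonnegative real.\<close>

lemma psd_iff_nonneg: "psd A \<longleftrightarrow> (\<forall>x. 0 \<le> (\<Sum>i\<in>UNIV. cnj (x $ i) * (A *v x) $ i))"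
  by (auto simp: psd_def less_eq_complex_def)

lemma psd_outer: "psd (\<chi> i j. c i * cnj (c j))"
  unfolding psd_iff_nonneg
proof
  fix x :: "complex^'a"
  define s where "s = (\<Sum>i\<in>UNIV. cnj (x $ i) * c i)"
  have "(\<Sum>i\<in>UNIV. cnj (x $ i) * ((\<chi> i j. c i * cnj (c j)) *v x) $ i) = s * cnj s"
    unfolding s_def
    by (simp add: matrix_vector_mult_def sum_distrib_left sum_distrib_right mult_ac) (rule sum.swap)
  also have "0 \<le> s * cnj s"
    by (simp add: complex_mult_cnj less_eq_complex_def)
  finally show "0 \<le> (\<Sum>i\<in>UNIV. cnj (x $ i) * ((\<chi> i j. c i * cnj (c j)) *v x) $ i)" .
qed

lemma psd_diag_nonneg:
  assumes "psd X"
  shows "0 \<le> X $ j $ j"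
proof -
  have "(\<Sum>i\<in>UNIV. cnj (axis j 1 $ i) * (X *v axis j 1) $ i) = X $ j $ j"
    by (simp add: axis_def matrix_vector_mult_def if_distrib if_distribR cong: if_cong)
  then show ?thesis
    using assms unfolding psd_iff_nonneg by metis
qed

lemma rank_le_1_rows_proportional:
  fixes z :: "'a::field^'n^'m"
  assumes "rank z \<le> 1"
  obtains c b where "\<And>i. z $ i = c i *s b"
proof -
  obtain B where B: "B \<subseteq> rows z" "vec.independent B" "rows z \<subseteq> vec.span B" "card B = vec.dim (rows z)"
    using vec.basis_exists by blast
  have "card B \<le> 1"
    using B(4) assms by (simp add: row_rank_def_gen)
  then have "B = {} \<or> (\<exists>b. B = {b})"
    using vec.finiteI_independent[OF B(2)] by (metis card_0_eq card_1_singletonE le_eq_less_or_eq less_one)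
  then obtain b where b: "B \<subseteq> {b}"
    by blast
  have "z $ i \<in> vec.span {b}" for i
  proof -
    have "row i z \<in> rows z"
      by (auto simp: rows_def)
    then show ?thesis
      using B(3) vec.span_mono[OF b] by (metis row_def subsetD vec_lambda_eta)
  qed
  then have "\<exists>c. z $ i = c *s b" for i
    by (auto simp: vec.span_singleton)
  then show ?thesis
    using that by metis
qed

text \<open>
  For rank-one \<open>z\<close> with rows \<open>c\<^sub>i b\<close>, the pairing of \<open>zz z\<close> with \<open>\<phi>\<close> is the quadratic form of the
  positive matrix \<open>\<phi>(c c\<^sup>*)\<close> at the conjugate of \<open>b\<close>.
\<close>

lemma pairing_zz_nonneg:
  fixes z :: "complex^'n^'m"
  assumes "\<phi> \<in> P1" and z: "\<And>i. z $ i = c i *s b"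
  shows "0 \<le> pairing (zz z) \<phi>"
proof -
  define M where "M = \<phi> (\<chi> i j. c i * cnj (c j))"
  define x where "x = (\<chi> k. cnj (b $ k))"
  have lin: "clinear_map \<phi>" and "psd M"
    using assms(1) psd_outer unfolding M_def P1_def by auto
  then have "0 \<le> (\<Sum>k\<in>UNIV. cnj (x $ k) * (M *v x) $ k)"
    unfolding psd_iff_nonneg by blast
  also have "\<dots> = (\<Sum>k\<in>UNIV. \<Sum>l\<in>UNIV. \<Sum>i\<in>UNIV. \<Sum>j\<in>UNIV.
                    (c i * b $ k) * cnj (c j * b $ l) * \<phi> (unitmat i j) $ k $ l)"
  proof -
    have "M $ k $ l = (\<Sum>i\<in>UNIV. \<Sum>j\<in>UNIV. c i * cnj (c j) * \<phi> (unitmat i j) $ k $ l)" for k l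
      unfolding M_def by (subst clinear_map_eq_sum_unitmat[OF lin]) (simp add: cscale_def)
    then show ?thesis
      by (simp add: x_def matrix_vector_mult_def sum_distrib_left sum_distrib_right mult_ac)
  qed
  also have "\<dots> = pairing (zz z) \<phi>"
    by (subst sum_swap_pairs) (simp add: pairing_expand zz_def z vector_scalar_mult_def)
  finally show ?thesis .
qed

lemma V1_pairing_P1_nonneg:
  assumes "A \<in> V1" "\<phi> \<in> P1"
  shows "0 \<le> pairing A \<phi>"
proof -
  obtain k :: nat and c z where cz: "\<forall>i<k. c i \<ge> 0 \<and> rank (z i) \<le> 1" and A: "A = (\<Sum>i<k. c i *\<^sub>R zz (z i))"
    using assms(1) unfolding V1_def by blast
  have "0 \<le> pairing (zz (z i)) \<phi>" if "i < k" for i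
    using cz that by (metis rank_le_1_rows_proportional pairing_zz_nonneg[OF assms(2)])
  with cz show ?thesis
    unfolding A pairing_sum pairing_scaleR
    by (intro sum_nonneg) (simp add: less_eq_complex_def)
qed

lemma V1_eq_0_if_diag_nonpos:
  fixes A :: "complex^('m::finite \<times> 'n::finite)^('m \<times> 'n)"
  assumes "A \<in> V1" and diag: "\<And>p. A $ p $ p \<le> 0"
  shows "A = 0"
proof -
  obtain k :: nat and c :: "nat \<Rightarrow> real" and z :: "nat \<Rightarrow> complex^'n^'m"
    where cz: "\<forall>i<k. c i \<ge> 0 \<and> rank (z i) \<le> 1" and A: "A = (\<Sum>i<k. c i *\<^sub>R zz (z i))"
    using assms(1) unfolding V1_def by blast
  define w where "w i p = z i $ fst p $ snd p" for i p
  have A_entry: "A $ p $ q = (\<Sum>i<k. of_real (c i) * (w i p * cnj (w i q)))" for p q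
    by (simp add: A zz_def w_def scaleR_conv_of_real[where 'a=complex])
  have vanish: "c i = 0 \<or> w i p = 0" if "i < k" for i p
  proof -
    define q where "q j = c j * (cmod (w j p))\<^sup>2" for j
    have nonneg: "0 \<le> q j" if "j \<in> {..<k}" for j
      using cz that by (simp add: q_def)
    have "sum q {..<k} = Re (A $ p $ p)"
      by (simp add: q_def A_entry Re_sum complex_mult_cnj cmod_power2)
    also have "\<dots> \<le> 0"
      using diag[of p] by (simp add: less_eq_complex_def)
    finally have "sum q {..<k} = 0"
      using sum_nonneg[of "{..<k}" q] nonneg by fastforce
    then have "q i = 0"
      using sum_nonneg_eq_0_iff[OF finite_lessThan nonneg] that by simp
    then show ?thesis
      by (simp add: q_def)
  qed
  have "A $ p $ q = 0" for p q
    unfolding A_entry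
  proof (intro sum.neutral ballI)
    fix i assume "i \<in> {..<k}"
    then show "of_real (c i) * (w i p * cnj (w i q)) = 0"
      using vanish[of i p] by auto
  qed
  then show "A = 0"
    by (simp add: vec_eq_iff)
qed

definition diag_entry_map :: "'m \<Rightarrow> 'n \<Rightarrow> complex^'m^'m \<Rightarrow> complex^'n^'n" where
  "diag_entry_map j l X = cscale (X $ j $ j) (unitmat l l)"

lemma diag_entry_map_in_P1:
  fixes j :: "'m::finite" and l :: "'n::finite"
  shows "diag_entry_map j l \<in> P1"
proof -
  have "psd (diag_entry_map j l X)" if "psd X" for X
    unfolding psd_iff_nonneg
  proof
    fix x :: "complex^'n"
    have "cnj (x $ i) * (diag_entry_map j l X $ i $ k * x $ k) =
        (if l = i \<and> l = k then X $ j $ j * (x $ l * cnj (x $ l)) else 0)" for i k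
      by (auto simp: diag_entry_map_def cscale_def unitmat_def)
    then have "(\<Sum>i\<in>UNIV. cnj (x $ i) * (diag_entry_map j l X *v x) $ i) = X $ j $ j * (x $ l * cnj (x $ l))"
      by (simp add: matrix_vector_mult_def sum_distrib_left sum_sum_delta)
    also have "0 \<le> \<dots>"
      by (rule mult_nonneg_nonneg[OF psd_diag_nonneg[OF that]]) (simp add: complex_mult_cnj less_eq_complex_def)
    finally show "0 \<le> (\<Sum>i\<in>UNIV. cnj (x $ i) * (diag_entry_map j l X *v x) $ i)" .
  qed
  moreover have "clinear_map (diag_entry_map j l)"
    by (simp add: clinear_map_def diag_entry_map_def cscale_def vec_eq_iff algebra_simps)
  ultimately show ?thesis
    by (simp add: P1_def)
qed

lemma pairing_diag_entry_map: "pairing A (diag_entry_map j l) = A $ (j, l) $ (j, l)"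
proof -
  have "A $ (i, k) $ (i', k') * diag_entry_map j l (unitmat i i') $ k $ k' =
      (if l = k \<and> l = k' then if j = i \<and> j = i' then A $ (i, k) $ (i', k') else 0 else 0)" for i i' k k'
    by (auto simp: diag_entry_map_def cscale_def unitmat_def)
  then show ?thesis
    by (simp add: pairing_expand sum_sum_delta)
qed

lemma V1_eq_0_if_orthogonal_to_interior_pt_P1:
  fixes A :: "complex^('m::finite \<times> 'n::finite)^('m \<times> 'n)"
  assumes "interior_pt P1 \<phi>" "A \<in> V1" "pairing A \<phi> = 0"
  shows "A = 0"
proof (rule V1_eq_0_if_diag_nonpos[OF assms(2)])
  fix p :: "'m \<times> 'n"
  obtain j l where p: "p = (j, l)"
    by fastforce
  obtain t where t: "t > 1" "fcomb t (diag_entry_map j l) \<phi> \<in> P1"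
    using assms(1) diag_entry_map_in_P1 unfolding interior_pt_def by blast
  then have "0 \<le> pairing A (fcomb t (diag_entry_map j l) \<phi>)"
    by (intro V1_pairing_P1_nonneg[OF assms(2)])
  then have "0 \<le> of_real (1 - t) * A $ p $ p"
    by (simp add: pairing_fcomb pairing_diag_entry_map assms(3) p)
  with t(1) show "A $ p $ p \<le> 0"
    by (auto simp: less_eq_complex_def mult_le_0_iff zero_le_mult_iff)
qed

theorem theorem3p1:
  fixes D E :: "(complex^'n^'m) set"
  assumes "csubspace D" and "csubspace E"
    and "proper_fface_of (sigma D E) (Dcone :: (complex^'m^'m \<Rightarrow> complex^'n^'n) set)"
    and "\<forall>\<phi>. interior_pt (sigma D E) \<phi> \<longrightarrow> interior_pt P1 \<phi>"
  shows "\<forall>A \<in> sigma_dual D E. A \<noteq> 0 \<longrightarrow> A \<in> Tcone - V1"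
proof (intro ballI impI)
  fix A assume A: "A \<in> sigma_dual D E" and "A \<noteq> 0"
  obtain \<phi> where \<phi>: "interior_pt (sigma D E) \<phi>"
    using sigma_ex_interior_pt[OF assms(1)] by blast
  then have "pairing A \<phi> = 0"
    using A by (simp add: sigma_dual_def interior_pt_def)
  then have "A \<notin> V1"
    using V1_eq_0_if_orthogonal_to_interior_pt_P1 assms(4) \<phi> \<open>A \<noteq> 0\<close> by blast
  moreover have "A \<in> Tcone"
    using A by (simp add: sigma_dual_def)
  ultimately show "A \<in> Tcone - V1" by blast
qed

end
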